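(* Let $\mu$ be the distribution constructed below. Then $\mu\in\mathcal{L}_{loc}$, i.e. for every $c>0$ and every $a\in\mathbb{R}$, $\mu((x,x+c])>0$ for all large $x$ and $\mu((x+a,x+a+c])\sim\mu((x,x+c])$.
   Context: $f(x)\sim g(x)$ means $\lim_{x\to\infty}f(x)/g(x)=1$. The class $\mathcal{L}_{loc}$ consists of distributions $\rho$ on $\mathbb{R}$ such that for every $c>0$, $\rho((x,x+c])>0$ for all sufficiently large $x$ and $\rho((x+a,x+a+c])\sim\rho((x,x+c])$ for every $a\in\mathbb{R}$. Construction: fix $1<x_0<b$ and $\delta\in(0,1)$ with $\delta<\min(x_0-1,\,b-x_0)$. Let $h$ be a continuous periodic function on $\mathbb{R}$ with period $\log b$ such that $h(\log x)>0$ for $x\in[1,x_0)\cup(x_0,b]$, $h(\log x_0)=0$, and $h(\log x)=-1/\log|x-x_0|$ for $0<|x-x_0|<\delta$. For $\alpha>0$ let $\phi(x):=x^{-\alpha-1}h(\log x)\mathbf{1}_{[1,\infty)}(x)$, $M:=\int_1^\infty x^{-1-\alpha}h(\log x)\,dx$, and $\mu(dx):=M^{-1}\phi(x)\,dx$. *)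

theory Defs
  imports "HOL-Probability.Probability"
begin

definition L_loc :: "real measure \<Rightarrow> bool" where
  "L_loc \<rho> \<longleftrightarrow> prob_space \<rho> \<and> sets \<rho> = sets borel \<and>
     (\<forall>c>0. (\<forall>\<^sub>F x in at_top. measure \<rho> {x<..x+c} > 0) \<and>
        (\<forall>a. ((\<lambda>x. measure \<rho> {x+a<..x+a+c} / measure \<rho> {x<..x+c}) \<longlongrightarrow> 1) at_top))"

definition phi_fun :: "(real \<Rightarrow> real) \<Rightarrow> real \<Rightarrow> real \<Rightarrow> real" where
  "phi_fun h \<alpha> x = indicator {1..} x * x powr (-\<alpha>-1) * h (ln x)"

definition M_const :: "(real \<Rightarrow> real) \<Rightarrow> real \<Rightarrow> real" where
  "M_const h \<alpha> = (LBINT x:{1..}. x powr (-1-\<alpha>) * h (ln x))"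

definition mu_meas :: "(real \<Rightarrow> real) \<Rightarrow> real \<Rightarrow> real measure" where
  "mu_meas h \<alpha> = density lborel (\<lambda>x. ennreal (phi_fun h \<alpha> x / M_const h \<alpha>))"

end

theory Submission
  imports Defs "HOL-Library.Periodic_Fun" "HOL-Real_Asymp.Real_Asymp"
begin

text \<open>
  Let \<open>f y = h (ln y)\<close>, so that \<open>f (b * y) = f y\<close>. The key point is that for fixed \<open>R\<close> and
  \<open>\<epsilon>\<close> and all large \<open>x\<close>, \<open>f\<close> is locally flat on \<open>[x - R, x + R]\<close>: for some \<open>w > 0\<close>,
  the integral of \<open>f\<close> over every subinterval \<open>(u, v]\<close> is \<open>(v - u) * w\<close> up to an error \<open>\<epsilon> * w\<close>.
  Dividing by the power \<open>E = b^k\<close> closest to \<open>x / x0\<close> maps the window onto an interval of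
  length \<open>2 R / E \<rightarrow> 0\<close> near \<open>x0\<close>, and there are three regimes. Away from \<open>x0\<close>, \<open>f\<close> is
  continuous and positive, hence nearly constant on that tiny interval. Close to \<open>x0\<close> but at
  distance much larger than \<open>R / E\<close>, \<open>f = -1 / ln \<bar>v - x0\<bar>\<close> changes only by a small relative
  amount. Within distance \<open>N / E\<close> of \<open>x0\<close>, \<open>f y = 1 / (ln E - ln \<bar>y - x0 * E\<bar>) \<approx> 1 / ln E\<close>,
  except on a short interval around the zero \<open>x0 * E\<close>: the zero of \<open>h\<close> is so flat that it
  costs almost no mass. Since moreover \<open>y powr (-\<alpha>-1)\<close> varies by a factor tending to 1 across
  the window, \<open>\<mu>((x+a, x+a+c]) / \<mu>((x, x+c]) \<rightarrow> 1\<close>.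
\<close>

lemma neg_inv_ln_relative_change:
  fixes r r' \<delta> e q :: real
  assumes "0 < r" "r < \<delta>" "r' < \<delta>" "\<delta> < 1" "0 \<le> q" "q \<le> 1/2"
    and "\<bar>r' - r\<bar> \<le> q * r" and "2 * q \<le> e * (- ln \<delta>)"
  shows "\<bar>(-1 / ln r') - (-1 / ln r)\<bar> \<le> e * (-1 / ln r)"
proof -
  have r'_ge: "r / 2 \<le> r'"
    using assms mult_right_mono[of q "1/2" r] by linarith
  then have "0 < r'" using assms by linarith
  have ln_neg: "ln r < 0" "ln r' < ln \<delta>" "ln \<delta> < 0"
    using assms \<open>0 < r'\<close> by auto
  have "0 \<le> e * (- ln \<delta>)" using assms by linarith
  then have e_nonneg: "0 \<le> e" using ln_neg(3) by (simp add: mult_le_0_iff)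
  have "ln (r' / r) \<le> r' / r - 1" using assms \<open>0 < r'\<close> by (intro ln_le_minus_one) auto
  also have "\<dots> \<le> q" using assms by (simp add: field_simps abs_le_iff)
  finally have up: "ln r' - ln r \<le> q" using assms \<open>0 < r'\<close> by (simp add: ln_div)
  have "ln (r / r') \<le> r / r' - 1" using assms \<open>0 < r'\<close> by (intro ln_le_minus_one) auto
  also have "\<dots> = (r - r') / r'" using \<open>0 < r'\<close> by (simp add: field_simps)
  also have "\<dots> \<le> (q * r) / (r / 2)"
    using assms r'_ge \<open>0 < r'\<close> by (intro frac_le) auto
  also have "\<dots> = 2 * q" using assms by simp
  finally have lo: "ln r - ln r' \<le> 2 * q" using assms \<open>0 < r'\<close> by (simp add: ln_div)
  have "\<bar>ln r' - ln r\<bar> \<le> e * (- ln \<delta>)" using up lo assms by linarith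
  also have "\<dots> \<le> e * (- ln r')" using e_nonneg ln_neg by (intro mult_left_mono) auto
  finally have diff: "\<bar>ln r' - ln r\<bar> \<le> e * (- ln r')" .
  have prod_pos: "0 < ln r * ln r'" using ln_neg by (simp add: mult_neg_neg)
  have "(-1 / ln r') - (-1 / ln r) = (ln r' - ln r) / (ln r * ln r')"
    using ln_neg by (simp add: field_simps)
  then have "\<bar>(-1 / ln r') - (-1 / ln r)\<bar> = \<bar>ln r' - ln r\<bar> / (ln r * ln r')"
    using prod_pos by simp
  also have "\<dots> \<le> e * (- ln r') / (ln r * ln r')"
    using prod_pos diff by (intro divide_right_mono) auto
  also have "\<dots> = e * (-1 / ln r)" using ln_neg by (simp add: field_simps)
  finally show ?thesis .
qed

lemma inv_minus_ln_bounds: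
  fixes K s S e \<rho> :: real
  assumes "0 < s" "s \<le> S" "1 \<le> S" "0 < \<rho>" "0 < e" "e \<le> 1/2"
    and "(1 + e) * ln S \<le> e * K" "- (1 - e) * ln \<rho> \<le> e * K" "0 < K"
  shows "0 < 1 / (K - ln s)" "1 / (K - ln s) \<le> (1 + e) / K"
    and "\<rho> \<le> s \<Longrightarrow> (1 - e) / K \<le> 1 / (K - ln s)"
proof -
  have ln_s: "ln s \<le> ln S" "0 \<le> ln S" using assms by auto
  have "ln S \<le> (1 + e) * ln S" using assms ln_s by (simp add: algebra_simps)
  also have "\<dots> \<le> e * K" by fact
  also have "\<dots> < K" using assms by simp
  finally have gap: "0 < K - ln s" using ln_s by linarith
  then show "0 < 1 / (K - ln s)" by simp
  have "(1 + e) * ln s \<le> (1 + e) * ln S"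
    using assms ln_s by (intro mult_left_mono) auto
  then have "K \<le> (1 + e) * (K - ln s)" using assms by (simp add: algebra_simps)
  then show "1 / (K - ln s) \<le> (1 + e) / K" using gap assms by (simp add: field_simps)
  assume "\<rho> \<le> s"
  then have "(1 - e) * ln \<rho> \<le> (1 - e) * ln s" using assms by (intro mult_left_mono) auto
  then have "(1 - e) * (K - ln s) \<le> K" using assms by (simp add: algebra_simps)
  then show "(1 - e) / K \<le> 1 / (K - ln s)" using gap assms by (simp add: field_simps)
qed

lemma ratio_sandwich:
  fixes l u w \<epsilon> c I1 I2 W1 W2 :: real
  assumes "0 < l" "l \<le> u" "0 < w" "\<epsilon> < c"
    and "l * I1 \<le> W1" "W1 \<le> u * I1" "l * I2 \<le> W2" "W2 \<le> u * I2"
    and "\<bar>I1 - c * w\<bar> \<le> \<epsilon> * w" "\<bar>I2 - c * w\<bar> \<le> \<epsilon> * w"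
  shows "\<bar>W1 / W2 - 1\<bar> \<le> (u / l) * ((c + \<epsilon>) / (c - \<epsilon>)) - 1"
proof -
  define L where "L = l * ((c - \<epsilon>) * w)"
  define U where "U = u * ((c + \<epsilon>) * w)"
  have I_bounds: "(c - \<epsilon>) * w \<le> I" "I \<le> (c + \<epsilon>) * w"
    if "\<bar>I - c * w\<bar> \<le> \<epsilon> * w" for I
    using that by (auto simp: algebra_simps abs_le_iff)
  have "0 < L" unfolding L_def using assms by simp
  have W_bounds: "L \<le> W" "W \<le> U"
    if "l * I \<le> W" "W \<le> u * I" "\<bar>I - c * w\<bar> \<le> \<epsilon> * w" for I W
  proof -
    have "L \<le> l * I" unfolding L_def using I_bounds[OF that(3)] assms by (intro mult_left_mono) auto
    then show "L \<le> W" using that by linarith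
    have "u * I \<le> U" unfolding U_def using I_bounds[OF that(3)] assms by (intro mult_left_mono) auto
    then show "W \<le> U" using that by linarith
  qed
  note W1 = W_bounds[OF assms(5,6,9)] and W2 = W_bounds[OF assms(7,8,10)]
  define \<theta> where "\<theta> = U / L"
  have \<theta>_eq: "\<theta> = (u / l) * ((c + \<epsilon>) / (c - \<epsilon>))"
    unfolding \<theta>_def U_def L_def using assms by (simp add: field_simps)
  have "W1 / W2 \<le> \<theta>" unfolding \<theta>_def using W1 W2 \<open>0 < L\<close> by (intro frac_le) auto
  moreover have "1 / \<theta> \<le> W1 / W2" unfolding \<theta>_def using W1 W2 \<open>0 < L\<close> by (simp add: frac_le)
  moreover have "1 - 1 / \<theta> \<le> \<theta> - 1"
  proof -
    have "0 < \<theta>" unfolding \<theta>_def using W1 \<open>0 < L\<close> by simp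
    moreover have "0 \<le> (\<theta> - 1)\<^sup>2" by simp
    ultimately show ?thesis by (simp add: field_simps power2_eq_square)
  qed
  ultimately show ?thesis unfolding \<theta>_eq by (auto simp: abs_le_iff)
qed

lemma compact_uniformly_relatively_continuous:
  fixes f :: "'a::metric_space \<Rightarrow> real"
  assumes "compact S" "continuous_on S f" "closed T" "T \<subseteq> S" "\<forall>v\<in>T. 0 < f v" "0 < e"
  obtains d where "0 < d" "\<forall>v\<in>T. \<forall>v'\<in>S. dist v' v < d \<longrightarrow> \<bar>f v' - f v\<bar> \<le> e * f v"
proof (cases "T = {}")
  case True
  then show ?thesis using that[of 1] by auto
next
  case False
  have "compact T" using compact_Int_closed[OF assms(1,3)] assms(4) by (simp add: Int_absorb1)
  then obtain v_min where "v_min \<in> T" and min: "\<forall>v\<in>T. f v_min \<le> f v"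
    using continuous_attains_inf[OF _ False continuous_on_subset[OF assms(2,4)]] by blast
  have "0 < e * f v_min" using assms \<open>v_min \<in> T\<close> by simp
  moreover have "uniformly_continuous_on S f"
    using assms by (intro compact_uniformly_continuous)
  ultimately obtain d where "0 < d"
    and d: "\<forall>v\<in>S. \<forall>v'\<in>S. dist v' v < d \<longrightarrow> dist (f v') (f v) < e * f v_min"
    unfolding uniformly_continuous_on_def by metis
  have "\<bar>f v' - f v\<bar> \<le> e * f v" if "v \<in> T" "v' \<in> S" "dist v' v < d" for v v'
  proof -
    have "\<bar>f v' - f v\<bar> < e * f v_min" using d that assms(4) by (auto simp: dist_real_def)
    also have "\<dots> \<le> e * f v" using min that assms(6) by simp
    finally show ?thesis by simp
  qed
  then show ?thesis using that \<open>0 < d\<close> by blast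
qed

lemma abs_diff_round_multiple_le:
  fixes t c \<beta> :: real
  assumes "0 < \<beta>"
  shows "\<bar>t - of_int (round ((t - c) / \<beta>)) * \<beta> - c\<bar> \<le> \<beta> / 2"
proof -
  let ?k = "of_int (round ((t - c) / \<beta>)) :: real"
  have "t - ?k * \<beta> - c = ((t - c) / \<beta> - ?k) * \<beta>" using assms by (simp add: field_simps)
  then have "\<bar>t - ?k * \<beta> - c\<bar> = \<bar>?k - (t - c) / \<beta>\<bar> * \<beta>"
    using assms by (simp add: abs_mult abs_minus_commute)
  also have "\<dots> \<le> 1/2 * \<beta>" using of_int_round_abs_le assms by (intro mult_right_mono) auto
  finally show ?thesis by simp
qed

lemma abs_ln_diff_le_iff:
  fixes v a c :: real
  assumes "0 < v" "0 < a"
  shows "\<bar>ln v - ln a\<bar> \<le> c \<longleftrightarrow> a * exp (- c) \<le> v \<and> v \<le> a * exp c"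
proof -
  have "ln (a * exp c) = ln a + c" "ln (a * exp (- c)) = ln a - c" using assms
    by (simp_all add: ln_mult)
  then have "ln v \<le> ln a + c \<longleftrightarrow> v \<le> a * exp c" "ln a - c \<le> ln v \<longleftrightarrow> a * exp (- c) \<le> v"
    using assms ln_le_cancel_iff[of v "a * exp c"] ln_le_cancel_iff[of "a * exp (- c)" v] by auto
  then show ?thesis by (auto simp: abs_le_iff)
qed

section \<open>Locally flat functions\<close>

definition locally_flat :: "(real \<Rightarrow> real) \<Rightarrow> real \<Rightarrow> real \<Rightarrow> real \<Rightarrow> bool" where
  "locally_flat F R \<epsilon> x \<longleftrightarrow> (\<exists>w>0. \<forall>u v. x - R \<le> u \<longrightarrow> u \<le> v \<longrightarrow> v \<le> x + R \<longrightarrow>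
     \<bar>(LINT y:{u<..v}|lborel. F y) - (v - u) * w\<bar> \<le> \<epsilon> * w)"

lemma set_integral_indicator_interval_le:
  fixes u v z \<rho> :: real
  assumes "0 \<le> \<rho>"
  shows "set_integrable lborel {u<..v} (indicator {z-\<rho><..<z+\<rho>} :: real \<Rightarrow> real)"
    and "(LINT y:{u<..v}|lborel. indicator {z-\<rho><..<z+\<rho>} y) \<le> 2 * \<rho>"
proof -
  let ?B = "{z-\<rho><..<z+\<rho>}"
  have eq: "(\<lambda>y. indicator {u<..v} y *\<^sub>R (indicator ?B y :: real)) = indicator ({u<..v} \<inter> ?B)"
    by (auto simp: indicator_def)
  have B: "?B \<in> fmeasurable lborel" using assms by (intro fmeasurableI) auto
  then have "?B \<inter> {u<..v} \<in> fmeasurable lborel"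
    by (rule fmeasurable_Int_fmeasurable) auto
  then show "set_integrable lborel {u<..v} (indicator ?B :: real \<Rightarrow> real)"
    unfolding set_integrable_def eq
      by (simp add: integrable_indicator_iff fmeasurable_def Int_commute)
  have "measure lborel ({u<..v} \<inter> ?B) \<le> measure lborel ?B"
    by (rule measure_mono_fmeasurable[OF _ _ B]) auto
  then show "(LINT y:{u<..v}|lborel. indicator ?B y) \<le> 2 * \<rho>"
    unfolding set_lebesgue_integral_def eq using assms by simp
qed

lemma set_integral_approx_const:
  fixes F :: "real \<Rightarrow> real" and u v w e \<rho> z :: real
  assumes "continuous_on {u..v} F" "u \<le> v" "0 \<le> w" "0 \<le> e" "e \<le> 1" "0 \<le> \<rho>"
    and bounds: "\<forall>y\<in>{u..v}. 0 \<le> F y \<and> F y \<le> (1 + e) * w \<and> (\<rho> \<le> \<bar>y - z\<bar> \<longrightarrow> (1 - e) * w \<le> F y)"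
  shows "\<bar>(LINT y:{u<..v}|lborel. F y) - (v - u) * w\<bar> \<le> (e * (v - u) + 2 * \<rho>) * w"
proof -
  let ?A = "{u<..v}" and ?B = "{z-\<rho><..<z+\<rho>}"
  have int_F: "set_integrable lborel ?A F"
    by (rule set_integrable_subset[OF borel_integrable_atLeastAtMost'[OF assms(1)]]) auto
  have int_const: "set_integrable lborel ?A (\<lambda>_. c)" for c :: real
    by (rule set_integrable_subset[OF
        borel_integrable_atLeastAtMost'[OF continuous_on_const[of "{u..v}"]]]) auto
  have integral_const: "(LINT y:?A|lborel. c) = c * (v - u)" for c :: real
    using assms(2) by (subst set_integral_const) auto
  note int_B = set_integral_indicator_interval_le[OF assms(6), of u v z]
  define c where "c = (1 - e) * w"
  have "0 \<le> c" unfolding c_def using assms by simp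
  have int_lower: "set_integrable lborel ?A (\<lambda>y. c - c * indicator ?B y)"
    using int_const int_B(1) by (intro set_integral_diff(1) set_integrable_mult_right) auto
  have "c * (v - u) - c * (2 * \<rho>) \<le> c * (v - u) - c * (LINT y:?A|lborel. indicator ?B y)"
    using int_B(2) \<open>0 \<le> c\<close> by (simp add: mult_left_mono)
  also have "\<dots> = (LINT y:?A|lborel. c - c * indicator ?B y)"
    using int_const int_B(1) by (subst set_integral_diff(2)) (auto simp: integral_const)
  also have "\<dots> \<le> (LINT y:?A|lborel. F y)"
  proof (rule set_integral_mono[OF int_lower int_F])
    fix y assume "y \<in> ?A"
    then show "c - c * indicator ?B y \<le> F y"
      using bounds unfolding c_def by (cases "y \<in> ?B") (auto simp: indicator_def)
  qed
  finally have lower: "c * (v - u) - c * (2 * \<rho>) \<le> (LINT y:?A|lborel. F y)" .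
  have "(LINT y:?A|lborel. F y) \<le> (LINT y:?A|lborel. (1 + e) * w)"
    using bounds by (intro set_integral_mono[OF int_F int_const]) auto
  then have upper: "(LINT y:?A|lborel. F y) \<le> (1 + e) * w * (v - u)"
    using integral_const[of "(1 + e) * w"] by linarith
  have "c * (2 * \<rho>) \<le> w * (2 * \<rho>)"
    unfolding c_def using assms by (intro mult_right_mono) (auto simp: algebra_simps)
  then have "(v - u) * w - (LINT y:?A|lborel. F y) \<le> (e * (v - u) + 2 * \<rho>) * w"
    using lower unfolding c_def by (simp add: algebra_simps)
  moreover have "(LINT y:?A|lborel. F y) - (v - u) * w \<le> (e * (v - u) + 2 * \<rho>) * w"
  proof -
    have "0 \<le> \<rho> * w" using assms by simp
    then show ?thesis using upper by (simp add: algebra_simps)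
  qed
  ultimately show ?thesis by (simp add: abs_le_iff)
qed

lemma locally_flat_intro:
  fixes F :: "real \<Rightarrow> real"
  assumes "continuous_on {x-R..x+R} F" "0 < w" "0 \<le> e" "e \<le> 1" "0 \<le> \<rho>"
    and "e * (2 * R) + 2 * \<rho> \<le> \<epsilon>"
    and "\<forall>y\<in>{x-R..x+R}. 0 \<le> F y \<and> F y \<le> (1 + e) * w \<and> (\<rho> \<le> \<bar>y - z\<bar> \<longrightarrow> (1 - e) * w \<le> F y)"
  shows "locally_flat F R \<epsilon> x"
  unfolding locally_flat_def
proof (intro exI[of _ w] conjI allI impI \<open>0 < w\<close>)
  fix u v assume uv: "x - R \<le> u" "u \<le> v" "v \<le> x + R"
  have "\<bar>(LINT y:{u<..v}|lborel. F y) - (v - u) * w\<bar> \<le> (e * (v - u) + 2 * \<rho>) * w"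
    using assms uv by (intro set_integral_approx_const continuous_on_subset[OF assms(1)]) auto
  also have "\<dots> \<le> \<epsilon> * w"
    using assms uv mult_left_mono[of "v - u" "2 * R" e] by (intro mult_right_mono) auto
  finally show "\<bar>(LINT y:{u<..v}|lborel. F y) - (v - u) * w\<bar> \<le> \<epsilon> * w" .
qed

lemma locally_flat_of_relative_bound:
  fixes F :: "real \<Rightarrow> real"
  assumes "continuous_on {x-R..x+R} F" "0 < w" "0 \<le> e" "e \<le> 1" "e * (2 * R) \<le> \<epsilon>"
    and "\<forall>y\<in>{x-R..x+R}. \<bar>F y - w\<bar> \<le> e * w"
  shows "locally_flat F R \<epsilon> x"
proof (rule locally_flat_intro[OF assms(1-4) order_refl])
  show "e * (2 * R) + 2 * 0 \<le> \<epsilon>" using assms by simp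
  have "0 \<le> (1 - e) * w" using assms by simp
  moreover have "\<bar>F y - w\<bar> \<le> e * w" if "y \<in> {x-R..x+R}" for y
    using assms(6) that by blast
  ultimately show "\<forall>y\<in>{x-R..x+R}. 0 \<le> F y \<and> F y \<le> (1 + e) * w \<and> (0 \<le> \<bar>y - x\<bar> \<longrightarrow> (1 - e) * w \<le> F y)"
    by (force simp: abs_le_iff algebra_simps)
qed

section \<open>The weight \<open>h \<circ> ln\<close>\<close>

locale log_periodic_weight =
  fixes x0 b \<delta> :: real and h :: "real \<Rightarrow> real"
  assumes x0_gt_1: "1 < x0" and x0_less_b: "x0 < b"
    and delta_pos: "0 < \<delta>" and delta_less_1: "\<delta> < 1"
    and h_cont: "continuous_on UNIV h"
    and h_periodic: "\<forall>t. h (t + ln b) = h t"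
    and h_pos: "\<forall>x\<in>{1..<x0} \<union> {x0<..b}. h (ln x) > 0"
    and h_x0: "h (ln x0) = 0"
    and h_near_x0: "\<forall>x. 0 < \<bar>x - x0\<bar> \<and> \<bar>x - x0\<bar> < \<delta> \<longrightarrow> h (ln x) = - 1 / ln \<bar>x - x0\<bar>"
begin

sublocale periodic_fun_simple h "ln b"
  using h_periodic by unfold_locales blast

lemma ln_b_pos: "0 < ln b"
  using x0_gt_1 x0_less_b by simp

lemma h_pos_near_ln_x0:
  assumes "\<bar>t - ln x0\<bar> < ln b" "t \<noteq> ln x0"
  shows "0 < h t"
proof -
  have pos: "0 < h s" if "0 \<le> s" "s \<le> ln b" "s \<noteq> ln x0" for s
  proof -
    have "exp s \<le> b" using that x0_gt_1 x0_less_b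
      by (metis exp_le_cancel_iff exp_ln less_trans zero_less_one)
    moreover have "exp s \<noteq> x0" using that by auto
    moreover have "1 \<le> exp s" using that by simp
    ultimately have "exp s \<in> {1..<x0} \<union> {x0<..b}" by auto
    from bspec[OF h_pos this] show ?thesis by simp
  qed
  have ln_x0: "0 < ln x0" "ln x0 < ln b" using x0_gt_1 x0_less_b by auto
  consider "t < 0" | "0 \<le> t" "t \<le> ln b" | "ln b < t" by linarith
  then show ?thesis
  proof cases
    case 1
    then show ?thesis using pos[of "t + ln b"] assms plus_1 ln_x0 by force
  next
    case 2
    then show ?thesis using pos assms by blast
  next
    case 3
    then show ?thesis using pos[of "t - ln b"] assms minus_1 ln_x0 by force
  qed
qed

definition scale :: "real \<Rightarrow> real" where
  "scale x = exp (of_int (round ((ln x - ln x0) / ln b)) * ln b)"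

lemma scale_pos: "0 < scale x"
  by (simp add: scale_def)

lemma h_ln_div_scale:
  assumes "0 < y"
  shows "h (ln (y / scale x)) = h (ln y)"
  using assms minus_of_int[of "ln y"] by (simp add: scale_def ln_div)

lemma ln_div_scale_near_ln_x0:
  assumes "0 < x"
  shows "\<bar>ln (x / scale x) - ln x0\<bar> \<le> ln b / 2"
  using abs_diff_round_multiple_le[OF ln_b_pos, of "ln x" "ln x0"] assms
  by (simp add: scale_def ln_div)

lemma filterlim_ln_scale: "filterlim (\<lambda>x. ln (scale x)) at_top at_top"
proof (rule filterlim_at_top_mono)
  show "filterlim (\<lambda>x. ln x - ln x0 - ln b / 2) at_top at_top" by real_asymp
  show "\<forall>\<^sub>F x in at_top. ln x - ln x0 - ln b / 2 \<le> ln (scale x)"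
    using eventually_gt_at_top[of 0]
  proof eventually_elim
    case (elim x)
    then have "\<bar>ln x - ln (scale x) - ln x0\<bar> \<le> ln b / 2"
      using ln_div_scale_near_ln_x0[of x] scale_pos[of x] by (simp add: ln_div)
    then show ?case by (simp only: abs_le_iff) linarith
  qed
qed

lemma h_eq_near_ln_x0: obtains s where "\<bar>s - ln x0\<bar> \<le> ln b / 2" "h t = h s"
proof
  show "\<bar>ln (exp t / scale (exp t)) - ln x0\<bar> \<le> ln b / 2" by (rule ln_div_scale_near_ln_x0) simp
  show "h t = h (ln (exp t / scale (exp t)))" using h_ln_div_scale[of "exp t"] by simp
qed

lemma h_nonneg: "0 \<le> h t"
proof -
  obtain s where "\<bar>s - ln x0\<bar> \<le> ln b / 2" "h t = h s" by (rule h_eq_near_ln_x0)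
  then show ?thesis using h_pos_near_ln_x0[of s] h_x0 ln_b_pos by (cases "s = ln x0") auto
qed

lemma h_bounded: obtains B where "\<forall>t. \<bar>h t\<bar> \<le> B"
proof -
  let ?I = "{ln x0 - ln b / 2 .. ln x0 + ln b / 2}"
  have "?I \<noteq> {}" using ln_b_pos by simp
  then obtain s_max where max: "\<forall>s\<in>?I. h s \<le> h s_max"
    using continuous_attains_sup[OF compact_Icc _ continuous_on_subset[OF h_cont]] by blast
  have "\<bar>h t\<bar> \<le> h s_max" for t
  proof -
    obtain s where s: "\<bar>s - ln x0\<bar> \<le> ln b / 2" "h t = h s" by (rule h_eq_near_ln_x0)
    then have "s \<in> ?I" by (simp only: abs_le_iff atLeastAtMost_iff) linarith
    then have "h t \<le> h s_max" using max s by simp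
    then show ?thesis using h_nonneg[of t] by simp
  qed
  then show ?thesis using that by blast
qed

lemma continuous_on_h_ln: "0 < a \<Longrightarrow> continuous_on {a..c} (\<lambda>y. h (ln y))"
  by (intro continuous_on_compose2[OF h_cont] continuous_intros) auto

lemma div_scale_bounds:
  assumes "0 < x"
  shows "x0 * exp (- (ln b / 2)) \<le> x / scale x" "x / scale x \<le> x0 * exp (ln b / 2)"
  using ln_div_scale_near_ln_x0[OF assms] abs_ln_diff_le_iff[of "x / scale x" x0 "ln b / 2"]
    assms scale_pos x0_gt_1 by auto

lemma div_scale_window:
  assumes "y \<in> {x-R..x+R}"
  shows "\<bar>y / scale x - x / scale x\<bar> \<le> R / scale x"
  using assms scale_pos[of x]
    by (simp add: diff_divide_distrib[symmetric] abs_le_iff divide_right_mono)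

lemma eventually_div_scale_less:
  assumes "0 < d"
  shows "\<forall>\<^sub>F x in at_top. R / scale x < d"
proof -
  have "\<forall>\<^sub>F K in at_top. R / exp K < d" using assms by real_asymp
  from eventually_compose_filterlim[OF this filterlim_ln_scale] show ?thesis
    using scale_pos by simp
qed

lemma h_ln_relatively_continuous_away_from_x0:
  assumes "0 < e"
  obtains d where "0 < d"
    and "\<And>v v'. x0 * exp (- (ln b / 2)) \<le> v \<Longrightarrow> v \<le> x0 * exp (ln b / 2) \<Longrightarrow> \<delta> / 2 \<le> \<bar>v - x0\<bar> \<Longrightarrow>
      \<bar>v' - v\<bar> < d \<Longrightarrow> 0 < h (ln v) \<and> \<bar>h (ln v') - h (ln v)\<bar> \<le> e * h (ln v)"
proof -
  define lo where "lo = x0 * exp (- (3/4 * ln b))"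
  define hi where "hi = x0 * exp (3/4 * ln b)"
  define T where "T = {lo..hi} \<inter> {v. \<delta> / 2 \<le> \<bar>v - x0\<bar>}"
  have "0 < lo" unfolding lo_def using x0_gt_1 by simp
  have pos: "0 < h (ln v)" if "v \<in> T" for v
  proof (rule h_pos_near_ln_x0)
    have "0 < v" using that \<open>0 < lo\<close> unfolding T_def by auto
    then have "\<bar>ln v - ln x0\<bar> \<le> 3/4 * ln b"
      using that x0_gt_1 unfolding T_def lo_def hi_def by (subst abs_ln_diff_le_iff) auto
    then show "\<bar>ln v - ln x0\<bar> < ln b" using ln_b_pos by linarith
    show "ln v \<noteq> ln x0" using that \<open>0 < v\<close> x0_gt_1 delta_pos unfolding T_def by auto
  qed
  moreover have "closed T"
    unfolding T_def by (intro closed_Int closed_atLeastAtMost closed_Collect_le continuous_intros)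
  ultimately obtain d where "0 < d"
    and d: "\<forall>v\<in>T. \<forall>v'\<in>{lo..hi}. dist v' v < d \<longrightarrow> \<bar>h (ln v') - h (ln v)\<bar> \<le> e * h (ln v)"
    using compact_uniformly_relatively_continuous[of "{lo..hi}" "\<lambda>v. h (ln v)" T e]
      continuous_on_h_ln[OF \<open>0 < lo\<close>] assms unfolding T_def by auto
  define gap where "gap = min (x0 * exp (- (ln b / 2)) - lo) (hi - x0 * exp (ln b / 2))"
  have "0 < gap" unfolding gap_def lo_def hi_def using x0_gt_1 ln_b_pos by simp
  show ?thesis
  proof (rule that[of "min d gap"])
    show "0 < min d gap" using \<open>0 < d\<close> \<open>0 < gap\<close> by simp
    fix v v' assume "x0 * exp (- (ln b / 2)) \<le> v" "v \<le> x0 * exp (ln b / 2)" "\<delta> / 2 \<le> \<bar>v - x0\<bar>"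
      and "\<bar>v' - v\<bar> < min d gap"
    then have "v \<in> T" "v' \<in> {lo..hi}" "dist v' v < d"
      unfolding T_def gap_def dist_real_def by auto
    then show "0 < h (ln v) \<and> \<bar>h (ln v') - h (ln v)\<bar> \<le> e * h (ln v)" using pos d by blast
  qed
qed

lemma eventually_locally_flat_away_from_x0:
  assumes "0 < R" "0 < \<epsilon>"
  shows "\<forall>\<^sub>F x in at_top. \<delta> / 2 \<le> \<bar>x / scale x - x0\<bar> \<longrightarrow> locally_flat (\<lambda>y. h (ln y)) R \<epsilon> x"
proof -
  define e where "e = min (\<epsilon> / (2 * R)) 1"
  have e: "0 < e" "e \<le> 1" "e * (2 * R) \<le> \<epsilon>"
    using assms pos_le_divide_eq[of "2 * R" e \<epsilon>] unfolding e_def by auto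
  obtain d where "0 < d" and d: "\<And>v v'. x0 * exp (- (ln b / 2)) \<le> v \<Longrightarrow> v \<le> x0 * exp (ln b / 2) \<Longrightarrow>
      \<delta> / 2 \<le> \<bar>v - x0\<bar> \<Longrightarrow> \<bar>v' - v\<bar> < d \<Longrightarrow> 0 < h (ln v) \<and> \<bar>h (ln v') - h (ln v)\<bar> \<le> e * h (ln v)"
    using h_ln_relatively_continuous_away_from_x0[OF e(1)] by blast
  show ?thesis using eventually_div_scale_less[OF \<open>0 < d\<close>, of R] eventually_gt_at_top[of R]
  proof eventually_elim
    case (elim x)
    show ?case
    proof
      assume far: "\<delta> / 2 \<le> \<bar>x / scale x - x0\<bar>"
      have "0 < x" using elim assms by linarith
      note close = d[OF div_scale_bounds[OF this] far]
      have "\<bar>h (ln y) - h (ln x)\<bar> \<le> e * h (ln x)" if "y \<in> {x-R..x+R}" for y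
      proof -
        have "\<bar>y / scale x - x / scale x\<bar> < d" using div_scale_window[OF that] elim by linarith
        moreover have "0 < y" using that elim by auto
        ultimately show ?thesis using close h_ln_div_scale \<open>0 < x\<close> by metis
      qed
      moreover have "0 < h (ln x)" using close[of "x / scale x"] h_ln_div_scale \<open>0 < x\<close> \<open>0 < d\<close>
        by auto
      ultimately show "locally_flat (\<lambda>y. h (ln y)) R \<epsilon> x"
        using e elim by (intro locally_flat_of_relative_bound continuous_on_h_ln) auto
    qed
  qed
qed

lemma h_ln_near_scaled_x0:
  assumes "0 < y" "y \<noteq> x0 * scale x" "\<bar>y - x0 * scale x\<bar> < \<delta> * scale x"
  shows "h (ln y) = 1 / (ln (scale x) - ln \<bar>y - x0 * scale x\<bar>)"
proof -
  let ?E = "scale x"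
  have E: "0 < ?E" by (rule scale_pos)
  have eq: "\<bar>y / ?E - x0\<bar> = \<bar>y - x0 * ?E\<bar> / ?E" using E by (simp add: field_simps)
  have "0 < \<bar>y / ?E - x0\<bar>" "\<bar>y / ?E - x0\<bar> < \<delta>"
    using assms E unfolding eq by (auto simp: field_simps)
  then have "h (ln (y / ?E)) = -1 / ln \<bar>y / ?E - x0\<bar>" using h_near_x0 by blast
  also have "\<dots> = 1 / (ln ?E - ln \<bar>y - x0 * ?E\<bar>)"
    using assms E unfolding eq by (simp add: ln_div flip: divide_minus_right)
  finally show ?thesis using h_ln_div_scale[OF assms(1)] by simp
qed

lemma h_ln_bounds_near_scaled_x0:
  assumes "0 < y" "\<bar>y - x0 * scale x\<bar> \<le> S" "1 \<le> S" "S < \<delta> * scale x"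
    and "0 < \<rho>" "0 < e" "e \<le> 1/2" "0 < ln (scale x)"
    and "(1 + e) * ln S \<le> e * ln (scale x)" "- (1 - e) * ln \<rho> \<le> e * ln (scale x)"
  shows "0 \<le> h (ln y) \<and> h (ln y) \<le> (1 + e) * (1 / ln (scale x)) \<and>
    (\<rho> \<le> \<bar>y - x0 * scale x\<bar> \<longrightarrow> (1 - e) * (1 / ln (scale x)) \<le> h (ln y))"
proof (cases "y = x0 * scale x")
  case True
  then have "h (ln y) = 0" using h_ln_div_scale[of y x] h_x0 scale_pos[of x] x0_gt_1 by auto
  then show ?thesis using True assms by simp
next
  case False
  then have "h (ln y) = 1 / (ln (scale x) - ln \<bar>y - x0 * scale x\<bar>)"
    using h_ln_near_scaled_x0 assms(1,2,4) by auto
  moreover note inv_minus_ln_bounds[of "\<bar>y - x0 * scale x\<bar>" S \<rho> e "ln (scale x)"]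
  ultimately show ?thesis using False assms by auto
qed

lemma eventually_locally_flat_near_scaled_x0:
  assumes "0 < R" "0 < \<epsilon>"
  shows "\<forall>\<^sub>F x in at_top. \<bar>x - x0 * scale x\<bar> \<le> N \<longrightarrow> locally_flat (\<lambda>y. h (ln y)) R \<epsilon> x"
proof -
  define S where "S = max 1 (N + R)"
  define e where "e = min (\<epsilon> / (4 * R)) (1/2)"
  define \<rho> where "\<rho> = min 1 (\<epsilon> / 4)"
  have e: "0 < e" "e \<le> 1/2" "e * (2 * R) + 2 * \<rho> \<le> \<epsilon>"
    using assms pos_le_divide_eq[of "4 * R" e \<epsilon>] unfolding e_def \<rho>_def by auto
  have \<rho>: "0 < \<rho>" unfolding \<rho>_def using assms by simp
  have "\<forall>\<^sub>F K in at_top. 0 < K \<and> S / exp K < \<delta> \<and> (1 + e) * ln S \<le> e * K \<and> - (1 - e) * ln \<rho> \<le> e * K"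
    using delta_pos e by (intro eventually_conj; real_asymp)
  from eventually_compose_filterlim[OF this filterlim_ln_scale]
  show ?thesis using eventually_gt_at_top[of R]
  proof eventually_elim
    case (elim x)
    have "S < \<delta> * scale x" using elim scale_pos[of x] by (simp add: field_simps)
    show ?case
    proof
      assume near: "\<bar>x - x0 * scale x\<bar> \<le> N"
      have "\<forall>y\<in>{x-R..x+R}. 0 \<le> h (ln y) \<and> h (ln y) \<le> (1 + e) * (1 / ln (scale x)) \<and>
        (\<rho> \<le> \<bar>y - x0 * scale x\<bar> \<longrightarrow> (1 - e) * (1 / ln (scale x)) \<le> h (ln y))"
        using elim e \<rho> near \<open>S < \<delta> * scale x\<close>
        by (intro ballI h_ln_bounds_near_scaled_x0[where S = S]) (auto simp: S_def)
      from locally_flat_intro[OF _ _ _ _ _ _ this] show "locally_flat (\<lambda>y. h (ln y)) R \<epsilon> x"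
        using elim e \<rho> continuous_on_h_ln[of "x - R"] by auto
    qed
  qed
qed

lemma h_ln_relatively_close_near_x0:
  assumes "0 < \<bar>v - x0\<bar>" "\<bar>v - x0\<bar> < \<delta> / 2" "\<bar>v' - v\<bar> \<le> q * \<bar>v - x0\<bar>"
    and "0 \<le> q" "q \<le> 1/2" "2 * q \<le> e * - ln \<delta>"
  shows "0 < h (ln v)" "\<bar>h (ln v') - h (ln v)\<bar> \<le> e * h (ln v)"
proof -
  define r r' where "r = \<bar>v - x0\<bar>" and "r' = \<bar>v' - x0\<bar>"
  have close: "\<bar>r' - r\<bar> \<le> q * r" using assms(3) unfolding r_def r'_def by linarith
  moreover have "q * r \<le> 1/2 * r" using assms unfolding r_def by (intro mult_right_mono) auto
  ultimately have "r / 2 \<le> r'" "r' \<le> 3/2 * r" unfolding abs_le_iff by linarith+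
  moreover have "0 < r" "r < \<delta> / 2" using assms(1,2) unfolding r_def by simp_all
  ultimately have "0 < r'" "r' < \<delta>" by linarith+
  then have h_v': "h (ln v') = -1 / ln r'" using h_near_x0 unfolding r'_def by blast
  have h_v: "h (ln v) = -1 / ln r" using assms(1,2) delta_pos h_near_x0 unfolding r_def by auto
  show "0 < h (ln v)" unfolding h_v using assms(1,2) delta_less_1 unfolding r_def
    by (simp add: divide_neg_neg)
  show "\<bar>h (ln v') - h (ln v)\<bar> \<le> e * h (ln v)"
    unfolding h_v h_v' using assms(4-6) delta_less_1 \<open>0 < r\<close> \<open>r < \<delta> / 2\<close> \<open>r' < \<delta>\<close> close
    by (intro neg_inv_ln_relative_change) auto
qed

lemma eventually_locally_flat_between:
  assumes "0 < R" "0 < \<epsilon>"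
  obtains N where "\<forall>\<^sub>F x in at_top. N < \<bar>x - x0 * scale x\<bar> \<longrightarrow> \<bar>x / scale x - x0\<bar> < \<delta> / 2 \<longrightarrow>
    locally_flat (\<lambda>y. h (ln y)) R \<epsilon> x"
proof -
  define e where "e = min (\<epsilon> / (2 * R)) 1"
  have e: "0 < e" "e \<le> 1" "e * (2 * R) \<le> \<epsilon>"
    using assms pos_le_divide_eq[of "2 * R" e \<epsilon>] unfolding e_def by auto
  define D where "D = e * - ln \<delta>"
  have "0 < D" unfolding D_def using e delta_pos delta_less_1 by (intro mult_pos_pos) auto
  define N where "N = max (2 * R) (2 * R / D)"
  define q where "q = R / N"
  have "0 < N" unfolding N_def using assms by simp
  have q: "0 \<le> q" "q \<le> 1/2" "2 * q \<le> e * - ln \<delta>"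
  proof -
    show "0 \<le> q" "q \<le> 1/2" unfolding q_def using assms \<open>0 < N\<close> by (simp_all add: N_def field_simps)
    have "2 * R \<le> N * D" using \<open>0 < D\<close> pos_divide_le_eq[of D "2 * R" N] unfolding N_def by simp
    then show "2 * q \<le> e * - ln \<delta>" unfolding q_def D_def[symmetric] using \<open>0 < N\<close>
      by (simp add: field_simps)
  qed
  have "\<forall>\<^sub>F x in at_top. N < \<bar>x - x0 * scale x\<bar> \<longrightarrow> \<bar>x / scale x - x0\<bar> < \<delta> / 2 \<longrightarrow>
    locally_flat (\<lambda>y. h (ln y)) R \<epsilon> x"
    using eventually_gt_at_top[of R]
  proof eventually_elim
    case (elim x)
    define E where "E = scale x"
    have "0 < E" unfolding E_def by (rule scale_pos)
    show ?case
    proof (intro impI)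
      assume far: "N < \<bar>x - x0 * scale x\<bar>" and near: "\<bar>x / scale x - x0\<bar> < \<delta> / 2"
      have "\<bar>x / E - x0\<bar> = \<bar>x - x0 * E\<bar> / E" using \<open>0 < E\<close> by (simp add: field_simps)
      then have "N / E < \<bar>x / E - x0\<bar>"
        using far \<open>0 < E\<close> unfolding E_def by (simp add: divide_strict_right_mono)
      moreover have "0 < N / E" using \<open>0 < N\<close> \<open>0 < E\<close> by simp
      ultimately have "0 < \<bar>x / E - x0\<bar>" by linarith
      note rel = h_ln_relatively_close_near_x0[OF this near[folded E_def] _ q]
      have "\<bar>h (ln y) - h (ln x)\<bar> \<le> e * h (ln x)" if "y \<in> {x-R..x+R}" for y
      proof -
        have "\<bar>y / E - x / E\<bar> \<le> R / E" using div_scale_window[OF that] unfolding E_def .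
        also have "\<dots> = q * (N / E)" unfolding q_def using \<open>0 < N\<close> by simp
        also have "\<dots> \<le> q * \<bar>x / E - x0\<bar>" using q \<open>N / E < \<bar>x / E - x0\<bar>\<close>
          by (intro mult_left_mono) auto
        finally have "\<bar>h (ln (y / E)) - h (ln (x / E))\<bar> \<le> e * h (ln (x / E))" by (rule rel(2))
        moreover have "0 < y" "0 < x" using that elim assms by auto
        ultimately show ?thesis using h_ln_div_scale unfolding E_def by simp
      qed
      moreover have "0 < h (ln x)"
        using rel(1)[of "x / E"] q(1) \<open>0 < \<bar>x / E - x0\<bar>\<close> h_ln_div_scale elim assms
        unfolding E_def by auto
      ultimately show "locally_flat (\<lambda>y. h (ln y)) R \<epsilon> x"
        using elim e by (intro locally_flat_of_relative_bound continuous_on_h_ln) auto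
    qed
  qed
  then show ?thesis by (rule that)
qed

lemma eventually_locally_flat:
  assumes "0 < R" "0 < \<epsilon>"
  shows "\<forall>\<^sub>F x in at_top. locally_flat (\<lambda>y. h (ln y)) R \<epsilon> x"
proof -
  obtain N where "\<forall>\<^sub>F x in at_top. N < \<bar>x - x0 * scale x\<bar> \<longrightarrow> \<bar>x / scale x - x0\<bar> < \<delta> / 2 \<longrightarrow>
      locally_flat (\<lambda>y. h (ln y)) R \<epsilon> x"
    by (rule eventually_locally_flat_between[OF assms])
  then show ?thesis
    using eventually_locally_flat_near_scaled_x0[OF assms, of N]
      eventually_locally_flat_away_from_x0[OF assms]
    by eventually_elim (meson linorder_not_le)
qed

lemma h_measurable [measurable]: "h \<in> borel_measurable borel"
  by (rule borel_measurable_continuous_onI[OF h_cont])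

end

section \<open>The measure \<open>\<mu>\<close>\<close>

locale log_periodic_density = log_periodic_weight +
  fixes \<alpha> :: real
  assumes alpha_pos: "0 < \<alpha>"
begin

abbreviation \<mu> :: "real measure" where "\<mu> \<equiv> mu_meas h \<alpha>"

definition phi_integral :: "real \<Rightarrow> real \<Rightarrow> real" where
  "phi_integral u v = (LINT y:{u<..v}|lborel. phi_fun h \<alpha> y)"

lemma phi_fun_nonneg: "0 \<le> phi_fun h \<alpha> y"
  unfolding phi_fun_def using h_nonneg by (auto simp: indicator_def)

lemma phi_fun_measurable [measurable]: "phi_fun h \<alpha> \<in> borel_measurable borel"
  unfolding phi_fun_def by measurable

lemma integrable_phi_fun: "integrable lborel (phi_fun h \<alpha>)"
proof -
  obtain B where B: "\<forall>t. \<bar>h t\<bar> \<le> B" by (rule h_bounded)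
  then have "0 \<le> B" by (meson abs_ge_zero order_trans)
  have "(\<lambda>y. y powr (-\<alpha>-1)) integrable_on {1..}"
    using has_integral_powr_to_inf[of "-\<alpha>-1" 1] alpha_pos by (auto simp: integrable_on_def)
  then have "(\<lambda>y. y powr (-\<alpha>-1)) absolutely_integrable_on {1..}"
    by (rule nonnegative_absolutely_integrable_1) auto
  then have "set_integrable lborel {1..} (\<lambda>y. y powr (-\<alpha>-1))"
    unfolding set_integrable_def by (subst (asm) integrable_completion) auto
  then have "integrable lborel (\<lambda>y. B * (indicator {1..} y * y powr (-\<alpha>-1)))"
    unfolding set_integrable_def by (intro integrable_mult_right) simp
  then show ?thesis
  proof (rule Bochner_Integration.integrable_bound)
    show "AE y in lborel. norm (phi_fun h \<alpha> y) \<le> norm (B * (indicator {1..} y * y powr (-\<alpha>-1)))"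
      using B \<open>0 \<le> B\<close>
        by (intro AE_I2) (auto simp: phi_fun_def indicator_def abs_mult intro: mult_left_mono)
  qed simp
qed

lemma M_const_eq: "M_const h \<alpha> = integral\<^sup>L lborel (phi_fun h \<alpha>)"
proof -
  have exponent: "-1 - \<alpha> = -\<alpha> - 1" by simp
  show ?thesis
    unfolding M_const_def set_lebesgue_integral_def phi_fun_def exponent by (simp add: mult.assoc)
qed

lemma M_const_nonneg: "0 \<le> M_const h \<alpha>"
  unfolding M_const_eq using phi_fun_nonneg by (intro integral_nonneg_AE) auto

lemma emeasure_mu:
  assumes "A \<in> sets borel"
  shows "emeasure \<mu> A = ennreal ((LINT y:A|lborel. phi_fun h \<alpha> y) / M_const h \<alpha>)"
proof -
  let ?M = "M_const h \<alpha>"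
  have "emeasure \<mu> A = (\<integral>\<^sup>+ y. ennreal (indicator A y *\<^sub>R phi_fun h \<alpha> y / ?M) \<partial>lborel)"
    unfolding mu_meas_def using assms
    by (subst emeasure_density) (auto intro!: nn_integral_cong simp: indicator_def)
  also have "\<dots> = ennreal (\<integral>y. indicator A y *\<^sub>R phi_fun h \<alpha> y / ?M \<partial>lborel)"
    using assms integrable_phi_fun phi_fun_nonneg M_const_nonneg
    by (intro nn_integral_eq_integral integrable_divide integrable_mult_indicator) auto
  finally show ?thesis unfolding set_lebesgue_integral_def by simp
qed

lemma measure_mu:
  assumes "A \<in> sets borel"
  shows "measure \<mu> A = (LINT y:A|lborel. phi_fun h \<alpha> y) / M_const h \<alpha>"
  using emeasure_mu[OF assms] phi_fun_nonneg M_const_nonneg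
  unfolding measure_def set_lebesgue_integral_def by (simp add: integral_nonneg_AE)

lemma measure_mu_interval: "measure \<mu> {u<..v} = phi_integral u v / M_const h \<alpha>"
  unfolding phi_integral_def by (rule measure_mu) simp

lemma phi_integral_bounds:
  assumes "1 \<le> a" "a \<le> u" "u \<le> v" "v \<le> c"
  shows "c powr (-\<alpha>-1) * (LINT y:{u<..v}|lborel. h (ln y)) \<le> phi_integral u v"
    and "phi_integral u v \<le> a powr (-\<alpha>-1) * (LINT y:{u<..v}|lborel. h (ln y))"
proof -
  have cont: "continuous_on {u..v} (\<lambda>y. y powr (-\<alpha>-1) * h (ln y))"
    using assms by (intro continuous_intros continuous_on_h_ln) auto
  have "set_integrable lborel {u<..v} (\<lambda>y. h (ln y))"
    using assms by (intro set_integrable_subset[OF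
        borel_integrable_atLeastAtMost'[OF continuous_on_h_ln[of u v]]]) auto
  then have int_h: "set_integrable lborel {u<..v} (\<lambda>y. p * h (ln y))" for p :: real
    by (rule set_integrable_mult_right)
  have int_phi: "set_integrable lborel {u<..v} (\<lambda>y. y powr (-\<alpha>-1) * h (ln y))"
    by (rule set_integrable_subset[OF borel_integrable_atLeastAtMost'[OF cont]]) auto
  have phi: "phi_integral u v = (LINT y:{u<..v}|lborel. y powr (-\<alpha>-1) * h (ln y))"
    unfolding phi_integral_def using assms
      by (intro set_lebesgue_integral_cong) (auto simp: phi_fun_def)
  have "(LINT y:{u<..v}|lborel. c powr (-\<alpha>-1) * h (ln y)) \<le> phi_integral u v"
    unfolding phi using assms alpha_pos h_nonneg
    by (intro set_integral_mono[OF int_h int_phi] mult_right_mono powr_mono2') auto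
  then show "c powr (-\<alpha>-1) * (LINT y:{u<..v}|lborel. h (ln y)) \<le> phi_integral u v" by simp
  have "phi_integral u v \<le> (LINT y:{u<..v}|lborel. a powr (-\<alpha>-1) * h (ln y))"
    unfolding phi using assms alpha_pos h_nonneg
    by (intro set_integral_mono[OF int_phi int_h] mult_right_mono powr_mono2') auto
  then show "phi_integral u v \<le> a powr (-\<alpha>-1) * (LINT y:{u<..v}|lborel. h (ln y))" by simp
qed

lemma eventually_phi_integral_pos:
  assumes "0 < c"
  shows "\<forall>\<^sub>F x in at_top. 0 < phi_integral x (x + c)"
proof -
  have "0 < c / 2" using assms by simp
  show ?thesis using eventually_locally_flat[OF assms \<open>0 < c / 2\<close>] eventually_ge_at_top[of "c + 1"]
  proof eventually_elim
    case (elim x)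
    let ?I = "LINT y:{x<..x+c}|lborel. h (ln y)"
    obtain w where "0 < w" and flat: "\<forall>u v. x - c \<le> u \<longrightarrow> u \<le> v \<longrightarrow> v \<le> x + c \<longrightarrow>
        \<bar>(LINT y:{u<..v}|lborel. h (ln y)) - (v - u) * w\<bar> \<le> c / 2 * w"
      using elim(1) unfolding locally_flat_def by blast
    have "\<bar>?I - c * w\<bar> \<le> c / 2 * w" using assms flat[rule_format, of x "x + c"] by simp
    moreover have "0 < c * w" using assms \<open>0 < w\<close> by simp
    ultimately have "0 < ?I" unfolding abs_le_iff by linarith
    then have "0 < (x + c) powr (-\<alpha>-1) * ?I" using elim assms by (intro mult_pos_pos) auto
    also have "\<dots> \<le> phi_integral x (x + c)"
      using elim assms by (intro phi_integral_bounds(1)) auto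
    finally show ?case .
  qed
qed

lemma M_const_pos: "0 < M_const h \<alpha>"
proof -
  obtain x where "0 < phi_integral x (x + 1)"
    using eventually_happens'[OF _ eventually_phi_integral_pos[of 1]] by auto
  also have "\<dots> \<le> M_const h \<alpha>"
    unfolding phi_integral_def M_const_eq set_lebesgue_integral_def
    using integrable_phi_fun phi_fun_nonneg
    by (intro integral_mono integrable_mult_indicator) (auto simp: indicator_def)
  finally show ?thesis .
qed

lemma prob_space_mu: "prob_space \<mu>"
proof
  have "emeasure \<mu> (space \<mu>) = ennreal ((LINT y:UNIV|lborel. phi_fun h \<alpha> y) / M_const h \<alpha>)"
    using emeasure_mu[of UNIV] by (simp add: mu_meas_def)
  then show "emeasure \<mu> (space \<mu>) = 1"
    using M_const_pos unfolding M_const_eq set_lebesgue_integral_def by simp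
qed

lemma tendsto_interval_ratio:
  assumes "0 < c"
  shows "((\<lambda>x. measure \<mu> {x+a<..x+a+c} / measure \<mu> {x<..x+c}) \<longlongrightarrow> 1) at_top"
proof (rule tendsto_iff[THEN iffD2], intro allI impI)
  fix e :: real assume "0 < e"
  define R where "R = \<bar>a\<bar> + c"
  define \<epsilon> where "\<epsilon> = c * e / (3 + e)"
  have "0 < R" "0 < \<epsilon>" "\<epsilon> < c"
    unfolding R_def \<epsilon>_def using assms \<open>0 < e\<close> by (auto simp: field_simps)
  have "\<epsilon> * (3 + e) = c * e" unfolding \<epsilon>_def using \<open>0 < e\<close> by simp
  then have "c + \<epsilon> \<le> (1 + 2 * e / 3) * (c - \<epsilon>)" by (simp add: algebra_simps)
  then have \<kappa>: "(c + \<epsilon>) / (c - \<epsilon>) \<le> 1 + 2 * e / 3"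
    using \<open>\<epsilon> < c\<close> by (simp add: pos_divide_le_eq)
  have "\<forall>\<^sub>F x in at_top. (x - R) powr (-\<alpha>-1) / (x + R) powr (-\<alpha>-1) * (1 + 2 * e / 3) < 1 + e"
    using \<open>0 < R\<close> \<open>0 < e\<close> by real_asymp
  then show "\<forall>\<^sub>F x in at_top. dist (measure \<mu> {x+a<..x+a+c} / measure \<mu> {x<..x+c}) 1 < e"
    using eventually_locally_flat[OF \<open>0 < R\<close> \<open>0 < \<epsilon>\<close>] eventually_ge_at_top[of "R + 1"]
  proof eventually_elim
    case (elim x)
    let ?I = "\<lambda>u. LINT y:{u<..u+c}|lborel. h (ln y)"
    obtain w where "0 < w" and flat: "\<forall>u v. x - R \<le> u \<longrightarrow> u \<le> v \<longrightarrow> v \<le> x + R \<longrightarrow>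
        \<bar>(LINT y:{u<..v}|lborel. h (ln y)) - (v - u) * w\<bar> \<le> \<epsilon> * w"
      using elim(2) unfolding locally_flat_def by blast
    have window: "x - R \<le> x + a" "x + a + c \<le> x + R" "x - R \<le> x" "x + c \<le> x + R"
      unfolding R_def using assms by auto
    have I: "\<bar>?I (x + a) - c * w\<bar> \<le> \<epsilon> * w" "\<bar>?I x - c * w\<bar> \<le> \<epsilon> * w"
      using flat[rule_format, of "x + a" "x + a + c"] flat[rule_format, of x "x + c"] window assms
      by (simp_all add: add.assoc)
    have "1 \<le> x - R" using elim by simp
    note W1 = phi_integral_bounds[OF this window(1) _ window(2)]
      and W2 = phi_integral_bounds[OF this window(3) _ window(4)]
    have "0 < (x + R) powr (-\<alpha>-1)" "(x + R) powr (-\<alpha>-1) \<le> (x - R) powr (-\<alpha>-1)"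
      using \<open>1 \<le> x - R\<close> \<open>0 < R\<close> alpha_pos by (auto intro: powr_mono2')
    moreover have "(x - R) powr (-\<alpha>-1) / (x + R) powr (-\<alpha>-1) * ((c + \<epsilon>) / (c - \<epsilon>)) < 1 + e"
      using elim(1) mult_left_mono[OF \<kappa>, of "(x - R) powr (-\<alpha>-1) / (x + R) powr (-\<alpha>-1)"] by simp
    ultimately have "\<bar>phi_integral (x + a) (x + a + c) / phi_integral x (x + c) - 1\<bar> < e"
      using ratio_sandwich[OF _ _ \<open>0 < w\<close> \<open>\<epsilon> < c\<close> W1 W2 I] assms
      by (simp add: add.assoc)
    then show ?case
      using M_const_pos by (simp add: measure_mu_interval dist_real_def)
  qed
qed

lemma L_loc_mu: "L_loc \<mu>"
  unfolding L_loc_def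
proof (intro conjI allI impI)
  show "prob_space \<mu>" by (rule prob_space_mu)
  show "sets \<mu> = sets borel" by (simp add: mu_meas_def)
  fix c :: real assume "0 < c"
  show "\<forall>\<^sub>F x in at_top. 0 < measure \<mu> {x<..x+c}"
    using eventually_phi_integral_pos[OF \<open>0 < c\<close>]
    by eventually_elim (simp add: measure_mu_interval M_const_pos)
  show "((\<lambda>x. measure \<mu> {x+a<..x+a+c} / measure \<mu> {x<..x+c}) \<longlongrightarrow> 1) at_top" for a
    by (rule tendsto_interval_ratio[OF \<open>0 < c\<close>])
qed

end

theorem lemma3p1:
  fixes x0 b \<delta> \<alpha> :: real and h :: "real \<Rightarrow> real"
  assumes "1 < x0" "x0 < b"
    and "0 < \<delta>" "\<delta> < 1" "\<delta> < min (x0 - 1) (b - x0)"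
    and "continuous_on UNIV h"
    and "\<forall>t. h (t + ln b) = h t"
    and "\<forall>x\<in>{1..<x0} \<union> {x0<..b}. h (ln x) > 0"
    and "h (ln x0) = 0"
    and "\<forall>x. 0 < \<bar>x - x0\<bar> \<and> \<bar>x - x0\<bar> < \<delta> \<longrightarrow> h (ln x) = - 1 / ln \<bar>x - x0\<bar>"
    and "\<alpha> > 0"
  shows "L_loc (mu_meas h \<alpha>)"
proof -
  interpret log_periodic_density x0 b \<delta> h \<alpha>
    using assms by unfold_locales auto
  show ?thesis by (rule L_loc_mu)
qed

end
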